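(* Let $n=p_1^{\alpha_1}p_2^{\alpha_2}\cdots p_r^{\alpha_r}$, where $r\geq 2$, $\alpha_1,\ldots,\alpha_r$ are positive integers and $p_1<p_2<\cdots<p_r$ are primes. For every $i\in\{1,2,\ldots,r-1\}$, in $\mathcal{P}(C_n)$, $$\deg(p_i^{\alpha_i})-\deg(p_r^{\alpha_r})>p_i^{\alpha_i-1}\left[(p_r-1)\,\phi\!\left(\frac{n}{p_i^{\alpha_i}p_r^{\alpha_r}}\right)-\frac{n}{p_i^{\alpha_i-1}p_r^{\alpha_r}}\right].$$
   Context: For a finite group $G$, the power graph $\mathcal{P}(G)$ is the simple undirected graph with vertex set $G$ in which two distinct vertices are adjacent if one is an integral power of the other. $C_n$ denotes the cyclic group of order $n$, identified with $\mathbb{Z}_n=\{0,1,\ldots,n-1\}$, so a positive divisor $d<n$ of $n$ is regarded as the element $d\in\mathbb{Z}_n$. $\deg(a)$ is the degree of vertex $a$ in $\mathcal{P}(C_n)$ and $\phi$ is Euler's totient function. *)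

theory Defs
  imports "HOL-Number_Theory.Number_Theory"
begin

text \<open>Power graph of the cyclic group C_n, identified with Z_n = {0,...,n-1} (additive).
  The k-th integral power of b is k*b mod n; since b has finite order, nonnegative k suffice.\<close>
definition pcn_adj :: "nat \<Rightarrow> nat \<Rightarrow> nat \<Rightarrow> bool" where
  "pcn_adj n a b \<longleftrightarrow> a < n \<and> b < n \<and> a \<noteq> b \<and>
     ((\<exists>k::nat. a = (k * b) mod n) \<or> (\<exists>k::nat. b = (k * a) mod n))"

definition pcn_deg :: "nat \<Rightarrow> nat \<Rightarrow> nat" where
  "pcn_deg n a = card {b. pcn_adj n a b}"

end

theory Submission
  imports Defs
begin

text \<open>Write \<open>n = a m\<close> with \<open>a\<close> coprime to \<open>m\<close>. In the power graph of \<open>\<int>\<^sub>n\<close>, \<open>b\<close> is a power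
  of \<open>a\<close> iff \<open>a\<close> divides \<open>b\<close>, and \<open>a\<close> is a power of \<open>b\<close> iff \<open>gcd b n\<close> divides \<open>a\<close>, i.e. iff \<open>b\<close> is
  coprime to \<open>m\<close>. Inclusion--exclusion over these two sets gives
  \<open>deg a = m + (a - 1) \<phi>(m) - 1\<close>. For \<open>a = p\<^sup>\<alpha> = a' p\<close>, \<open>c = q\<^sup>\<beta> = c' q\<close> and \<open>n = a c t\<close> this yields
  \<open>deg a - deg c - a' ((q - 1) \<phi>(t) - t p) = (t - \<phi>(t)) c + \<phi>(t) (a' (c' - 1) (q - p) + c')\<close>,
  which is positive because \<open>\<phi>(t) \<le> t\<close>, \<open>\<phi>(t) > 0\<close> and \<open>p < q\<close>.\<close>

lemma card_coprime_below: "card {b. b < m \<and> coprime b m} = totient (m::nat)"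
proof (cases "m \<le> 1")
  case True
  then have "m = 0 \<or> m = 1" by auto
  then show ?thesis by auto
next
  case False
  then have "{b. b < m \<and> coprime b m} = totatives m"
    by (auto simp: in_totatives_iff intro!: Nat.gr0I order.not_eq_order_implies_strict)
  then show ?thesis by (simp add: totient_def)
qed

lemma coprime_add_mult_left_iff: "coprime (c + k * m) m \<longleftrightarrow> coprime c (m::nat)"
  by (metis add.commute coprime_iff_gcd_eq_1 gcd.commute gcd_add_mult)

lemma card_coprime_below_mult:
  "card {b. b < k * m \<and> coprime b m} = k * totient (m::nat)"
proof (induction k)
  case 0
  then show ?case by simp
next
  case (Suc k)
  let ?S = "\<lambda>k. {b. b < k * m \<and> coprime b m}"
  have "?S (Suc k) = ?S k \<union> (\<lambda>c. c + k * m) ` {c. c < m \<and> coprime c m}"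
  proof (rule Set.set_eqI, rule iffI)
    fix b assume b: "b \<in> ?S (Suc k)"
    show "b \<in> ?S k \<union> (\<lambda>c. c + k * m) ` {c. c < m \<and> coprime c m}"
    proof (cases "b < k * m")
      case False
      then have "b = (b - k * m) + k * m" by simp
      then show ?thesis
        using b coprime_add_mult_left_iff[of "b - k * m" k m]
        by (auto simp: image_iff intro!: exI[of _ "b - k * m"])
    qed (use b in simp)
  qed (auto simp: coprime_add_mult_left_iff)
  moreover have "card ((\<lambda>c. c + k * m) ` {c. c < m \<and> coprime c m}) = totient m"
    by (subst card_image) (auto simp: card_coprime_below)
  moreover have "?S k \<inter> (\<lambda>c. c + k * m) ` {c. c < m \<and> coprime c m} = {}" by auto
  ultimately show ?case using Suc by (simp add: card_Un_disjoint)
qed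

lemma ex_mult_mod_eq_iff_gcd_dvd:
  fixes n x y :: nat
  assumes "0 < n" "x < n"
  shows "(\<exists>k. x = (k * y) mod n) \<longleftrightarrow> gcd y n dvd x"
proof
  assume "\<exists>k. x = (k * y) mod n"
  then obtain k where "x = (k * y) mod n" by blast
  then show "gcd y n dvd x" by (simp add: dvd_mod)
next
  assume d: "gcd y n dvd x"
  show "\<exists>k. x = (k * y) mod n"
  proof (cases "y = 0")
    case True
    then have "x = 0" using d assms by (auto dest: nat_dvd_not_less)
    then show ?thesis by (intro exI[of _ 0]) simp
  next
    case False
    obtain u v where uv: "y * u = n * v + gcd y n" using bezout_nat[OF False] by blast
    obtain c where c: "x = gcd y n * c" using d by blast
    have "(c * u) * y = n * (c * v) + x" using uv c by (simp add: algebra_simps)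
    then have "((c * u) * y) mod n = x" using assms by simp
    then show ?thesis by metis
  qed
qed

lemma gcd_dvd_coprime_factor_iff:
  fixes a m b :: nat
  assumes "coprime a m"
  shows "gcd b (a * m) dvd a \<longleftrightarrow> coprime b m"
proof
  assume "gcd b (a * m) dvd a"
  moreover have "gcd b m dvd gcd b (a * m)" by (rule gcd_mono) simp_all
  ultimately have "gcd b m dvd a" by (rule dvd_trans[rotated])
  then have "gcd b m dvd gcd a m" using gcd_dvd2 by (rule gcd_greatest)
  also have "gcd a m = 1" using assms by (simp only: coprime_iff_gcd_eq_1)
  finally show "coprime b m" by (simp only: coprime_iff_gcd_eq_1 nat_dvd_1_iff_1)
next
  assume "coprime b m"
  then have "coprime (gcd b (a * m)) m" by (rule coprime_divisors[OF gcd_dvd1 dvd_refl])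
  then show "gcd b (a * m) dvd a" using gcd_dvd2 coprime_dvd_mult_left_iff by blast
qed

lemma pcn_adj_coprime_factor_iff:
  fixes a m b :: nat
  assumes "coprime a m" "0 < a" "1 < m"
  shows "pcn_adj (a * m) a b \<longleftrightarrow> b < a * m \<and> b \<noteq> a \<and> (a dvd b \<or> coprime b m)"
proof (cases "b < a * m")
  case True
  have n: "0 < a * m" "a < a * m" using assms by auto
  have "(\<exists>k. a = (k * b) mod (a * m)) \<longleftrightarrow> coprime b m"
    using ex_mult_mod_eq_iff_gcd_dvd[OF n] gcd_dvd_coprime_factor_iff[OF assms(1)] by simp
  moreover have "(\<exists>k. b = (k * a) mod (a * m)) \<longleftrightarrow> a dvd b"
    by (subst ex_mult_mod_eq_iff_gcd_dvd[OF n(1) True]) simp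
  ultimately show ?thesis unfolding pcn_adj_def using True n(2) by blast
qed (simp add: pcn_adj_def)

lemma pcn_deg_coprime_factor:
  fixes a m :: nat
  assumes "coprime a m" "0 < a" "1 < m"
  shows "real (pcn_deg (a * m) a) = real m + (real a - 1) * real (totient m) - 1"
proof -
  define M where "M = {b. b < a * m \<and> a dvd b}"
  define C where "C = {b. b < a * m \<and> coprime b m}"
  have nbrs: "{b. pcn_adj (a * m) a b} = (M \<union> C) - {a}"
    using pcn_adj_coprime_factor_iff[OF assms] by (auto simp: M_def C_def)
  have "M = (*) a ` {..<m}"
    using assms by (auto simp: M_def image_iff)
  then have card_M: "card M = m" using assms by (simp add: card_image inj_on_def)
  have card_C: "card C = a * totient m"
    unfolding C_def by (rule card_coprime_below_mult)
  have "M \<inter> C = (*) a ` {c. c < m \<and> coprime c m}"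
    using assms by (auto simp: M_def C_def image_iff)
  then have card_MC: "card (M \<inter> C) = totient m"
    using assms by (simp add: card_image inj_on_def card_coprime_below)
  have "a \<in> M \<union> C" using assms by (simp add: M_def)
  moreover have fin: "finite M" "finite C" by (simp_all add: M_def C_def)
  ultimately have "pcn_deg (a * m) a + 1 = card (M \<union> C)"
    unfolding pcn_deg_def nbrs using card_Suc_Diff1[of "M \<union> C" a] by simp
  then have "pcn_deg (a * m) a + totient m + 1 = m + a * totient m"
    using card_Un_Int[OF fin] card_M card_C card_MC by simp
  then show ?thesis by (simp add: algebra_simps flip: of_nat_add of_nat_mult)
qed

lemma pcn_deg_prime_power_diff_gt:
  fixes p q \<alpha> \<beta> t :: nat
  defines "n \<equiv> p ^ \<alpha> * q ^ \<beta> * t"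
  assumes "prime p" "prime q" "p < q" "0 < \<alpha>" "0 < \<beta>" "0 < t" "coprime p t" "coprime q t"
  shows "real (pcn_deg n (p ^ \<alpha>)) - real (pcn_deg n (q ^ \<beta>)) >
    real (p ^ (\<alpha> - 1)) * (real (q - 1) * real (totient t) - real (t * p))"
proof -
  define a b where "a = p ^ (\<alpha> - 1)" and "b = q ^ (\<beta> - 1)"
  have pa: "p ^ \<alpha> = a * p" and qb: "q ^ \<beta> = b * q"
    using assms(5,6) by (simp_all add: a_def b_def power_eq_if)
  have p2: "2 \<le> p" and q2: "2 \<le> q" using assms(2,3) by (simp_all add: prime_ge_2_nat)
  have a1: "1 \<le> a" and b1: "1 \<le> b" using p2 q2 by (simp_all add: a_def b_def)
  have "coprime p q" using assms(2-4) by (simp add: primes_coprime)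
  then have cop: "coprime (p ^ \<alpha>) (q ^ \<beta> * t)" "coprime (q ^ \<beta>) (p ^ \<alpha> * t)"
    using assms(8,9) by (simp_all add: coprime_commute)
  have "1 < p ^ \<alpha>" "1 < q ^ \<beta>"
    using p2 q2 assms(5,6) one_less_power[of p \<alpha>] one_less_power[of q \<beta>] by simp_all
  then have big: "1 < q ^ \<beta> * t" "1 < p ^ \<alpha> * t"
    using assms(7) by (auto intro: less_le_trans[OF _ mult_le_mono2[of 1 t, unfolded mult_1_right]])
  have n_eq: "n = p ^ \<alpha> * (q ^ \<beta> * t)" "n = q ^ \<beta> * (p ^ \<alpha> * t)"
    unfolding n_def by (simp_all add: ac_simps)
  define A B P Q T F where "A = real a" and "B = real b" and "P = real p" and "Q = real q"
    and "T = real t" and "F = real (totient t)"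
  have deg_p: "real (pcn_deg n (p ^ \<alpha>)) = B * Q * T + (A * P - 1) * (B * (Q - 1) * F) - 1"
  proof -
    have "real (pcn_deg n (p ^ \<alpha>)) =
        real (q ^ \<beta> * t) + (real (p ^ \<alpha>) - 1) * real (totient (q ^ \<beta> * t)) - 1"
      unfolding n_eq(1) by (rule pcn_deg_coprime_factor[OF cop(1) _ big(1)]) (use p2 in simp)
    moreover have "totient (q ^ \<beta> * t) = b * (q - 1) * totient t"
      using assms(3,6,9) by (simp add: totient_mult_coprime totient_prime_power b_def)
    ultimately show ?thesis using q2 by (simp add: pa qb A_def B_def P_def Q_def T_def F_def of_nat_diff)
  qed
  have deg_q: "real (pcn_deg n (q ^ \<beta>)) = A * P * T + (B * Q - 1) * (A * (P - 1) * F) - 1"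
  proof -
    have "real (pcn_deg n (q ^ \<beta>)) =
        real (p ^ \<alpha> * t) + (real (q ^ \<beta>) - 1) * real (totient (p ^ \<alpha> * t)) - 1"
      unfolding n_eq(2) by (rule pcn_deg_coprime_factor[OF cop(2) _ big(2)]) (use q2 in simp)
    moreover have "totient (p ^ \<alpha> * t) = a * (p - 1) * totient t"
      using assms(2,5,8) by (simp add: totient_mult_coprime totient_prime_power a_def)
    ultimately show ?thesis using p2 by (simp add: pa qb A_def B_def P_def Q_def T_def F_def of_nat_diff)
  qed
  have rhs: "real (p ^ (\<alpha> - 1)) * (real (q - 1) * real (totient t) - real (t * p)) = A * ((Q - 1) * F - T * P)"
    using q2 by (simp add: A_def a_def P_def Q_def T_def F_def of_nat_diff)
  have "real (pcn_deg n (p ^ \<alpha>)) - real (pcn_deg n (q ^ \<beta>)) - A * ((Q - 1) * F - T * P)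
      = (T - F) * B * Q + F * (A * (B - 1) * (Q - P) + B)"
    unfolding deg_p deg_q by (simp add: algebra_simps)
  moreover have "0 \<le> (T - F) * B * Q"
    using totient_le[of t] by (simp add: B_def T_def F_def Q_def)
  moreover have "0 < F * (A * (B - 1) * (Q - P) + B)"
    using a1 b1 assms(4,7) by (simp add: A_def B_def F_def Q_def P_def add_nonneg_pos)
  ultimately have "0 < real (pcn_deg n (p ^ \<alpha>)) - real (pcn_deg n (q ^ \<beta>)) - A * ((Q - 1) * F - T * P)"
    by (metis add_nonneg_pos)
  then show ?thesis using rhs by linarith
qed

lemma prod_prime_powers_split_two:
  fixes p \<alpha> :: "nat \<Rightarrow> nat"
  assumes "finite I" "i \<in> I" "r \<in> I" "i \<noteq> r" "inj_on p I" "\<And>j. j \<in> I \<Longrightarrow> prime (p j)"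
  obtains t where "(\<Prod>j\<in>I. p j ^ \<alpha> j) = p i ^ \<alpha> i * p r ^ \<alpha> r * t"
    and "0 < t" and "coprime (p i) t" and "coprime (p r) t"
proof
  define J where "J = I - {i, r}"
  have "I = insert i (insert r J)" using assms(2,3) by (auto simp: J_def)
  then have "(\<Prod>j\<in>I. p j ^ \<alpha> j) = (\<Prod>j\<in>insert i (insert r J). p j ^ \<alpha> j)" by simp
  also have "\<dots> = p i ^ \<alpha> i * p r ^ \<alpha> r * (\<Prod>j\<in>J. p j ^ \<alpha> j)"
    using assms(1,4) by (simp add: J_def mult.assoc)
  finally show "(\<Prod>j\<in>I. p j ^ \<alpha> j) = p i ^ \<alpha> i * p r ^ \<alpha> r * (\<Prod>j\<in>J. p j ^ \<alpha> j)" .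
  show "0 < (\<Prod>j\<in>J. p j ^ \<alpha> j)"
    by (rule prod_pos) (use assms(6) in \<open>auto simp: J_def prime_gt_0_nat\<close>)
  have "coprime (p k) (\<Prod>j\<in>J. p j ^ \<alpha> j)" if "k \<in> {i, r}" for k
  proof (rule prod_coprime_right)
    fix j assume j: "j \<in> J"
    have "prime (p k)" "prime (p j)" using that j assms(2,3,6) by (auto simp: J_def)
    moreover have "p k \<noteq> p j"
      using that j assms(2,3) inj_onD[OF assms(5)] by (auto simp: J_def)
    ultimately show "coprime (p k) (p j ^ \<alpha> j)"
      by (simp add: primes_coprime coprime_power_right_iff)
  qed
  then show "coprime (p i) (\<Prod>j\<in>J. p j ^ \<alpha> j)" "coprime (p r) (\<Prod>j\<in>J. p j ^ \<alpha> j)" by simp_all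
qed

theorem lemma2p3:
  fixes n r :: nat and p \<alpha> :: "nat \<Rightarrow> nat"
  assumes "r \<ge> 2"
    and "\<And>j. j \<in> {1..r} \<Longrightarrow> prime (p j)"
    and "\<And>j. j \<in> {1..r} \<Longrightarrow> \<alpha> j \<ge> 1"
    and "strict_mono_on {1..r} p"
    and "n = (\<Prod>j=1..r. p j ^ \<alpha> j)"
    and "i \<in> {1..r-1}"
  shows "real (pcn_deg n (p i ^ \<alpha> i)) - real (pcn_deg n (p r ^ \<alpha> r)) >
    real (p i ^ (\<alpha> i - 1)) *
      (real (p r - 1) * real (totient (n div (p i ^ \<alpha> i * p r ^ \<alpha> r)))
       - real (n div (p i ^ (\<alpha> i - 1) * p r ^ \<alpha> r)))"
proof -
  have ir: "i \<in> {1..r}" "r \<in> {1..r}" "i < r" using assms(1,6) by auto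
  obtain t where n_eq: "n = p i ^ \<alpha> i * p r ^ \<alpha> r * t"
    and t: "0 < t" "coprime (p i) t" "coprime (p r) t"
    using prod_prime_powers_split_two[of "{1..r}" i r p \<alpha>] ir assms(2,4,5)
    by (auto intro: strict_mono_on_imp_inj_on)
  have factors: "prime (p i)" "prime (p r)" "p i < p r" "0 < \<alpha> i" "0 < \<alpha> r"
    using ir assms(2,3) strict_mono_onD[OF assms(4) ir] by (auto simp: Suc_le_eq)
  have "p i ^ \<alpha> i = p i ^ (\<alpha> i - 1) * p i" using factors(4) by (simp add: power_eq_if)
  then have "n div (p i ^ \<alpha> i * p r ^ \<alpha> r) = t" "n div (p i ^ (\<alpha> i - 1) * p r ^ \<alpha> r) = t * p i"
    using factors by (simp_all add: n_eq prime_gt_0_nat ac_simps)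
  moreover have "real (pcn_deg n (p i ^ \<alpha> i)) - real (pcn_deg n (p r ^ \<alpha> r)) >
      real (p i ^ (\<alpha> i - 1)) * (real (p r - 1) * real (totient t) - real (t * p i))"
    unfolding n_eq using factors t by (rule pcn_deg_prime_power_diff_gt)
  ultimately show ?thesis by simp
qed

end
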